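(* Let $G$ and $H$ be groups such that the power quandles $\mathrm{Pq}(G)$ and $\mathrm{Pq}(H)$ are isomorphic. Then the centers $\mathrm{Z}(G)$ and $\mathrm{Z}(H)$ have the same cardinality. If moreover $\mathrm{Z}(G)$ (equivalently $\mathrm{Z}(H)$) is finite, then $\mathrm{Z}(G)\cong\mathrm{Z}(H)$ as groups.
   Context: A power quandle $(P,\rhd,\pi,e)$ consists of a set $P$, a binary operation $\rhd$, an element $e$, and maps $\pi^n\colon P\to P$ ($n\in\mathbb{Z}$) satisfying: each $\lambda_a\colon b\mapsto a\rhd b$ is bijective and $a\rhd(b\rhd c)=(a\rhd b)\rhd(a\rhd c)$; $a\rhd a=a$; $e\rhd b=b$, $a\rhd e=e$; $\pi^1=\mathrm{id}$, $\pi^m\circ\pi^n=\pi^{mn}$; $\pi^0(a)=e$; $a\rhd\pi^n(b)=\pi^n(a\rhd b)$; $\pi^n(a)\rhd b=\lambda_a^n(b)$. An isomorphism of power quandles is a bijection preserving $\rhd$, all $\pi^n$ and $e$. For a group $G$, $\mathrm{Pq}(G)$ is the power quandle on the underlying set of $G$ with $a\rhd b=aba^{-1}$, $\pi^n(a)=a^n$, and $e$ the identity element. $\mathrm{Z}(G)$ denotes the center of $G$. *)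

theory Defs
  imports "HOL-Algebra.Algebra" "HOL-Library.Equipollence"
begin

definition grp_center :: "('a, 'b) monoid_scheme \<Rightarrow> 'a set" where
  "grp_center G = {z \<in> carrier G. \<forall>x \<in> carrier G. z \<otimes>\<^bsub>G\<^esub> x = x \<otimes>\<^bsub>G\<^esub> z}"

text \<open>Isomorphism of power quandles Pq(G) -> Pq(H): a bijection of the carriers
  preserving conjugation a |> b = a b a^-1, all integer powers pi^n(a) = a^n,
  and the identity element.\<close>
definition pq_iso :: "('a, 'c) monoid_scheme \<Rightarrow> ('b, 'd) monoid_scheme \<Rightarrow> ('a \<Rightarrow> 'b) \<Rightarrow> bool" where
  "pq_iso G H f \<longleftrightarrow>
     bij_betw f (carrier G) (carrier H) \<and>
     (\<forall>a \<in> carrier G. \<forall>b \<in> carrier G.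
        f (a \<otimes>\<^bsub>G\<^esub> b \<otimes>\<^bsub>G\<^esub> inv\<^bsub>G\<^esub> a)
          = f a \<otimes>\<^bsub>H\<^esub> f b \<otimes>\<^bsub>H\<^esub> inv\<^bsub>H\<^esub> (f a)) \<and>
     (\<forall>a \<in> carrier G. \<forall>n::int. f (a [^]\<^bsub>G\<^esub> n) = f a [^]\<^bsub>H\<^esub> n) \<and>
     f \<one>\<^bsub>G\<^esub> = \<one>\<^bsub>H\<^esub>"

definition pq_isomorphic :: "('a, 'c) monoid_scheme \<Rightarrow> ('b, 'd) monoid_scheme \<Rightarrow> bool" where
  "pq_isomorphic G H \<longleftrightarrow> (\<exists>f. pq_iso G H f)"

end

theory Submission
  imports Defs
begin

text \<open>A power quandle isomorphism \<open>f\<close> preserves conjugation, so it maps the center (the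
  elements acting trivially by conjugation) bijectively onto the center; this gives the
  equipotence. It need not be multiplicative on the center, but it preserves powers and the
  identity, so for every \<open>k\<close> it matches the solutions of \<open>z [^] k = \<one>\<close> in the two centers.
  A finite abelian group is determined up to isomorphism by these counts: an element of
  maximal order generates a cyclic direct factor, the factors split off on both sides are
  isomorphic and their counts cancel, and induction on the order handles the complements.\<close>


lemma (in group) subgroups_subset_set_mult:
  assumes "subgroup H G" and "subgroup K G"
  shows "H \<subseteq> H <#> K" and "K \<subseteq> H <#> K"
proof -
  have "h \<otimes> \<one> \<in> H <#> K" if "h \<in> H" for h
    using that subgroup.one_closed[OF assms(2)] unfolding set_mult_def by blast
  then show "H \<subseteq> H <#> K" using subgroup.mem_carrier[OF assms(1)] by fastforce
  have "\<one> \<otimes> k \<in> H <#> K" if "k \<in> K" for k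
    using that subgroup.one_closed[OF assms(1)] unfolding set_mult_def by blast
  then show "K \<subseteq> H <#> K" using subgroup.mem_carrier[OF assms(2)] by fastforce
qed

lemma (in group) int_pow_gcd_mem_subgroup:
  assumes K: "subgroup K G" and x: "x \<in> carrier G"
    and "x [^] (i::int) \<in> K" and "x [^] (j::int) \<in> K"
  shows "x [^] gcd i j \<in> K"
proof -
  obtain u v where "u * i + v * j = gcd i j" using bezout_int by blast
  then have "x [^] gcd i j = (x [^] i) [^] u \<otimes> (x [^] j) [^] v"
    using x by (simp add: int_pow_pow int_pow_mult mult.commute flip: \<open>u * i + v * j = gcd i j\<close>)
  then show ?thesis
    using assms by (simp add: subgroup.m_closed subgroup_int_pow_closed)
qed

text \<open>Take \<open>y \<notin> K\<close> and the least \<open>r > 0\<close> with \<open>y [^] r \<in> K\<close>; for a prime \<open>p\<close>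
  dividing \<open>r\<close>, the element \<open>y [^] (r div p)\<close> works.\<close>
lemma (in group) exists_prime_pow_mem_subgroup:
  assumes fin: "finite (carrier G)" and K: "subgroup K G" and ne: "K \<noteq> carrier G"
  obtains y p where "y \<in> carrier G" "y \<notin> K" "Factorial_Ring.prime (p::nat)" "y [^] p \<in> K"
proof -
  obtain y0 where y0: "y0 \<in> carrier G" "y0 \<notin> K" using ne subgroup.subset[OF K] by blast
  define Q where "Q r \<longleftrightarrow> 0 < r \<and> y0 [^] r \<in> K" for r :: nat
  have "Q (order G)"
    using y0 fin pow_order_eq_1 order_gt_0_iff_finite subgroup.one_closed[OF K] by (simp add: Q_def)
  then have Qr: "Q (LEAST r. Q r)" and least: "\<And>r. Q r \<Longrightarrow> (LEAST r. Q r) \<le> r"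
    by (auto intro: LeastI Least_le)
  define r where "r = (LEAST r. Q r)"
  have "r \<noteq> 1" using Qr y0 r_def by (auto simp: Q_def)
  then obtain p where p: "Factorial_Ring.prime p" "p dvd r" using prime_factor_nat by blast
  then obtain q where r: "r = p * q" by blast
  have "0 < q" using Qr r r_def by (simp add: Q_def)
  have "y0 [^] q \<notin> K"
  proof
    assume "y0 [^] q \<in> K"
    then have "r \<le> q" using least \<open>0 < q\<close> r_def by (simp add: Q_def)
    then show False using r \<open>0 < q\<close> prime_gt_1_nat[OF p(1)] by simp
  qed
  moreover have "(y0 [^] q) [^] p \<in> K"
    using Qr y0 r r_def by (simp add: Q_def nat_pow_pow mult.commute)
  ultimately show thesis using that y0 p by blast
qed

lemma (in group) prime_dvd_if_pow_mem_subgroup: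
  assumes K: "subgroup K G" and y: "y \<in> carrier G" "y \<notin> K"
    and p: "Factorial_Ring.prime (p::nat)" "y [^] p \<in> K" and n: "y [^] (n::nat) \<in> K"
  shows "p dvd n"
proof (rule ccontr)
  assume "\<not> p dvd n"
  then have "coprime p n" using p(1) prime_imp_coprime_nat by blast
  then have "gcd (int p) (int n) = 1" by (simp add: coprime_iff_gcd_eq_1)
  moreover have "y [^] int p \<in> K" and "y [^] int n \<in> K" using p n by (simp_all add: int_pow_int)
  ultimately have "y [^] (1::int) \<in> K" using int_pow_gcd_mem_subgroup[OF K y(1)] by metis
  then show False using y by simp
qed

lemma (in comm_group) ord_mult_coprime:
  assumes x: "x \<in> carrier G" and y: "y \<in> carrier G" and cop: "coprime (ord x) (ord y)"
  shows "ord (x \<otimes> y) = ord x * ord y"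
proof (rule dvd_antisym)
  show "ord (x \<otimes> y) dvd ord x * ord y" using abelian_ord_mul_divides x y by blast
  define k where "k = ord (x \<otimes> y)"
  have "(x \<otimes> y) [^] (k * n) = \<one>" for n
    using x y by (simp add: k_def pow_eq_id)
  then have prod: "x [^] (k * n) \<otimes> y [^] (k * n) = \<one>" for n
    using x y by (simp add: nat_pow_distrib)
  have "y [^] (k * ord y) = \<one>" and "x [^] (k * ord x) = \<one>"
    using x y by (simp_all add: pow_eq_id)
  then have "x [^] (k * ord y) = \<one>" and "y [^] (k * ord x) = \<one>"
    using prod[of "ord y"] prod[of "ord x"] x y by (metis r_one l_one nat_pow_closed)+
  then have "ord x dvd k * ord y" and "ord y dvd k * ord x"
    using x y pow_eq_id by blast+
  then have "ord x dvd k" and "ord y dvd k"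
    using cop coprime_dvd_mult_left_iff coprime_commute by blast+
  then show "ord x * ord y dvd k" using cop divides_mult by blast
qed

text \<open>If \<open>x [^] ord a \<noteq> \<one>\<close>, a prime \<open>p\<close> occurs in \<open>ord x\<close> to a higher power than in
  \<open>ord a\<close>, and multiplying the \<open>p\<close>-part of \<open>x\<close> with the \<open>p'\<close>-part of \<open>a\<close> gives an element of larger order.\<close>
lemma (in comm_group) pow_ord_max_eq_one:
  assumes fin: "finite (carrier G)" and a: "a \<in> carrier G"
    and max: "\<And>x. x \<in> carrier G \<Longrightarrow> ord x \<le> ord a"
    and x: "x \<in> carrier G"
  shows "x [^] ord a = \<one>"
proof (rule ccontr)
  assume "x [^] ord a \<noteq> \<one>"
  then have ndvd: "\<not> ord x dvd ord a" using x pow_eq_id by blast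
  define n m where "n = ord x" and "m = ord a"
  have "n \<noteq> 0" "m \<noteq> 0" using ord_ge_1[OF fin x] ord_ge_1[OF fin a] by (auto simp: n_def m_def)
  obtain p where p: "Factorial_Ring.prime p" and less: "multiplicity p m < multiplicity p n"
    using multiplicity_le_imp_dvd[OF \<open>n \<noteq> 0\<close>] ndvd not_le_imp_less
    unfolding n_def m_def by blast
  define e s where "e = multiplicity p n" and "s = multiplicity p m"
  obtain m' where m: "m = p ^ s * m'" "\<not> p dvd m'"
    using multiplicity_decompose'[of m p] s_def \<open>m \<noteq> 0\<close> p not_prime_unit by blast
  obtain n' where n: "n = p ^ e * n'" using multiplicity_dvd e_def by blast
  have "p \<noteq> 0" "n' \<noteq> 0" "m' \<noteq> 0" using p n m \<open>n \<noteq> 0\<close> \<open>m \<noteq> 0\<close> by auto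
  have "ord (x [^] n') = p ^ e" and "ord (a [^] (p ^ s)) = m'"
    using ord_pow[OF x, of n'] ord_pow[OF a, of "p ^ s"] n m \<open>p \<noteq> 0\<close> \<open>n' \<noteq> 0\<close>
    by (simp_all add: n_def m_def)
  moreover have "coprime (p ^ e) m'"
    using m(2) p by (simp add: prime_imp_coprime coprime_power_left_iff)
  ultimately have "ord (x [^] n' \<otimes> a [^] (p ^ s)) = p ^ e * m'"
    using ord_mult_coprime x a by simp
  moreover have "p ^ s < p ^ e"
    using less p prime_gt_1_nat by (simp add: e_def s_def power_strict_increasing)
  then have "m < p ^ e * m'" using m \<open>m' \<noteq> 0\<close> by simp
  moreover have "ord (x [^] n' \<otimes> a [^] (p ^ s)) \<le> m" using max x a by (simp add: m_def)
  ultimately show False by simp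
qed

lemma (in group) exists_max_ord:
  assumes "finite (carrier G)"
  obtains a where "a \<in> carrier G" "\<And>x. x \<in> carrier G \<Longrightarrow> ord x \<le> ord a"
proof -
  have "Max (ord ` carrier G) \<in> ord ` carrier G" using assms by (intro Max_in) auto
  then obtain a where "a \<in> carrier G" "ord a = Max (ord ` carrier G)" by auto
  then show thesis using that assms by simp
qed

lemma (in comm_group) two_le_ord_max:
  assumes fin: "finite (carrier G)" and a: "a \<in> carrier G"
    and max: "\<And>x. x \<in> carrier G \<Longrightarrow> ord x \<le> ord a" and nontriv: "carrier G \<noteq> {\<one>}"
  shows "2 \<le> ord a"
proof -
  have "a \<noteq> \<one>"
  proof
    assume "a = \<one>"
    then have "carrier G \<subseteq> {\<one>}" using pow_ord_max_eq_one[OF fin a max] by auto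
    then show False using nontriv by blast
  qed
  then show ?thesis using ord_ge_1[OF fin a] ord_eq_1[OF a] by simp
qed

section \<open>Cyclic direct factors\<close>

text \<open>Take \<open>y\<close> outside \<open>P <#> C\<close> with \<open>y [^] p = a [^] t \<otimes> c\<close>. As \<open>ord a\<close> is the exponent,
  \<open>p\<close> divides \<open>ord a\<close>; raising to \<open>ord a div p\<close> and using \<open>P \<inter> C \<subseteq> {\<one>}\<close> shows that \<open>p\<close>
  divides \<open>t\<close>, and then \<open>y \<otimes> inv (a [^] (t div p))\<close> is a \<open>p\<close>-th root of \<open>c\<close>.\<close>
lemma (in comm_group) exists_prime_root_in_complement:
  assumes fin: "finite (carrier G)" and a: "a \<in> carrier G"
    and exp: "\<And>x. x \<in> carrier G \<Longrightarrow> x [^] ord a = \<one>"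
    and C: "subgroup C G" and disj: "range (\<lambda>i::int. a [^] i) \<inter> C \<subseteq> {\<one>}"
    and ne: "range (\<lambda>i::int. a [^] i) <#> C \<noteq> carrier G"
  obtains w p where "w \<in> carrier G" "w \<notin> range (\<lambda>i::int. a [^] i) <#> C"
    "Factorial_Ring.prime (p::nat)" "w [^] p \<in> C"
proof -
  define P K where "P = range (\<lambda>i::int. a [^] i)" and "K = P <#> C"
  have P: "subgroup P G" using subgroup_of_powers[OF a] by (simp add: P_def)
  have K: "subgroup K G" using mult_subgroups[OF P C] by (simp add: K_def)
  have PK: "P \<subseteq> K" and CK: "C \<subseteq> K" using subgroups_subset_set_mult[OF P C] by (simp_all add: K_def)
  have "K \<noteq> carrier G" using ne by (simp add: K_def P_def)
  then obtain y p where y: "y \<in> carrier G" "y \<notin> K" and p: "Factorial_Ring.prime (p::nat)" "y [^] p \<in> K"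
    using exists_prime_pow_mem_subgroup[OF fin K] by blast
  then obtain t c where c: "c \<in> C" and yp: "y [^] int p = a [^] (t::int) \<otimes> c"
    unfolding K_def P_def set_mult_def by (auto simp: int_pow_int)
  have cG: "c \<in> carrier G" using subgroup.mem_carrier[OF C c] .
  have "y [^] ord a \<in> K" using exp[OF y(1)] subgroup.one_closed[OF K] by simp
  then have "p dvd ord a" using prime_dvd_if_pow_mem_subgroup[OF K y p] by blast
  then obtain q where q: "ord a = p * q" ..
  have "0 < q" using q ord_ge_1[OF fin a] by (simp add: gr0I)
  have "(a [^] t) [^] int q \<in> C"
  proof -
    have "\<one> = (y [^] int p) [^] int q" using exp[OF y(1)] q y by (simp add: int_pow_int nat_pow_pow)
    also have "\<dots> = (a [^] t) [^] int q \<otimes> c [^] int q" using yp a cG by (simp add: int_pow_distrib)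
    finally have "(a [^] t) [^] int q = inv (c [^] int q)" using a cG by (simp add: inv_equality)
    then show ?thesis using c C by (simp add: subgroup.m_inv_closed subgroup_int_pow_closed)
  qed
  moreover have "(a [^] t) [^] int q \<in> P" using a by (simp add: P_def int_pow_pow)
  ultimately have "a [^] (t * int q) = \<one>" using disj a by (auto simp: P_def int_pow_pow)
  then have "int p * int q dvd t * int q" using a q int_pow_eq_id by simp
  then obtain t' where t: "t = int p * t'" using \<open>0 < q\<close> by (auto elim: dvdE)
  define w where "w = y \<otimes> inv (a [^] t')"
  have "w [^] int p = c"
  proof -
    have "w [^] int p = a [^] t \<otimes> c \<otimes> inv (a [^] t)"
      using y a yp t by (simp add: w_def int_pow_distrib int_pow_inv int_pow_pow mult.commute)
    also have "\<dots> = c \<otimes> (a [^] t \<otimes> inv (a [^] t))" using a cG by (simp add: m_comm[of _ c] m_assoc)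
    finally show ?thesis using a cG by simp
  qed
  moreover have "w \<notin> K"
  proof
    assume "w \<in> K"
    moreover have "a [^] t' \<in> K" using PK by (auto simp: P_def)
    ultimately have "w \<otimes> a [^] t' \<in> K" by (rule subgroup.m_closed[OF K])
    then show False using y a by (simp add: w_def m_assoc)
  qed
  moreover have "w \<in> carrier G" using y a by (simp add: w_def)
  ultimately show thesis
    using that[of w p] p c by (simp add: K_def P_def int_pow_int)
qed

text \<open>If \<open>c \<otimes> w [^] j \<in> P\<close>, split \<open>j\<close> modulo \<open>p\<close>: the remainder \<open>s\<close> satisfies
  \<open>w [^] s \<in> P <#> C\<close>, which forces \<open>s = 0\<close>, so the element already lies in \<open>C\<close>.\<close>
lemma (in comm_group) disjoint_set_mult_powers_of_root:
  assumes P: "subgroup P G" and C: "subgroup C G" and disj: "P \<inter> C \<subseteq> {\<one>}"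
    and w: "w \<in> carrier G" "w \<notin> P <#> C"
    and p: "Factorial_Ring.prime (p::nat)" "w [^] p \<in> C"
  shows "P \<inter> (C <#> range (\<lambda>j::int. w [^] j)) \<subseteq> {\<one>}"
proof
  define K where "K = P <#> C"
  have K: "subgroup K G" using mult_subgroups[OF P C] by (simp add: K_def)
  have CK: "C \<subseteq> K" and PK: "P \<subseteq> K" using subgroups_subset_set_mult[OF P C] by (simp_all add: K_def)
  fix z assume z: "z \<in> P \<inter> (C <#> range (\<lambda>j::int. w [^] j))"
  then obtain c j where c: "c \<in> C" and zc: "z = c \<otimes> w [^] (j::int)"
    unfolding set_mult_def by blast
  define d s where "d = j div int p" and "s = j mod int p"
  define c' where "c' = c \<otimes> (w [^] int p) [^] d"
  have c': "c' \<in> C"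
    using c p(2) by (simp add: c'_def int_pow_int subgroup.m_closed[OF C] subgroup_int_pow_closed[OF C])
  have c'G: "c' \<in> carrier G" using subgroup.mem_carrier[OF C c'] .
  have "w [^] j = (w [^] int p) [^] d \<otimes> w [^] s"
    using w by (simp add: d_def s_def int_pow_pow flip: int_pow_mult)
  then have zc': "z = c' \<otimes> w [^] s"
    using zc w subgroup.mem_carrier[OF C c] by (simp add: c'_def m_assoc)
  have "s = 0"
  proof (rule ccontr)
    assume "s \<noteq> 0"
    moreover have "0 \<le> s" "s < int p" using p(1) prime_gt_0_nat by (simp_all add: s_def)
    ultimately obtain s' where s': "s = int s'" "0 < s'" "s' < p"
      using nonneg_int_cases[of s] by fastforce
    have "w [^] s = inv c' \<otimes> z" using zc' c'G w by (simp add: m_assoc flip: inv_solve_left)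
    also have "\<dots> \<in> K"
      using z c' CK PK by (auto intro!: subgroup.m_closed[OF K] subgroup.m_inv_closed[OF K])
    finally have "w [^] s' \<in> K" using s' by (simp add: int_pow_int)
    moreover have "w \<notin> K" and "w [^] p \<in> K" using w(2) p(2) CK by (auto simp: K_def)
    ultimately have "p dvd s'" using prime_dvd_if_pow_mem_subgroup[OF K w(1)] p(1) by blast
    then show False using s' by (auto dest: dvd_imp_le)
  qed
  then have "z \<in> C" using zc' c' c'G by simp
  then show "z \<in> {\<one>}" using z disj by blast
qed

text \<open>A maximal subgroup meeting the powers of \<open>a\<close> trivially spans the group together with
  them: otherwise adjoining a root \<open>w\<close> with \<open>w [^] p\<close> in it enlarges it.\<close>
lemma (in comm_group) exists_complement_powers:
  assumes fin: "finite (carrier G)" and a: "a \<in> carrier G"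
    and exp: "\<And>x. x \<in> carrier G \<Longrightarrow> x [^] ord a = \<one>"
  obtains C where "subgroup C G" "range (\<lambda>i::int. a [^] i) \<inter> C \<subseteq> {\<one>}"
    "range (\<lambda>i::int. a [^] i) <#> C = carrier G"
proof -
  let ?P = "range (\<lambda>i::int. a [^] i)"
  have P: "subgroup ?P G" using subgroup_of_powers[OF a] .
  have "\<exists>D. subgroup D G \<and> ?P \<inter> D \<subseteq> {\<one>} \<and> ?P <#> D = carrier G"
    if "subgroup C G" "?P \<inter> C \<subseteq> {\<one>}" for C
    using that
  proof (induction "card (carrier G) - card C" arbitrary: C rule: less_induct)
    case (less C)
    show ?case
    proof (cases "?P <#> C = carrier G")
      case True
      then show ?thesis using less.prems by auto
    next
      case False
      obtain w p where w: "w \<in> carrier G" "w \<notin> ?P <#> C"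
        and p: "Factorial_Ring.prime (p::nat)" "w [^] p \<in> C"
        using exists_prime_root_in_complement[OF fin a exp less.prems False] .
      define C' where "C' = C <#> range (\<lambda>j::int. w [^] j)"
      have W: "subgroup (range (\<lambda>j::int. w [^] j)) G" using subgroup_of_powers[OF w(1)] .
      have C': "subgroup C' G" using mult_subgroups[OF less.prems(1) W] by (simp add: C'_def)
      have disj: "?P \<inter> C' \<subseteq> {\<one>}"
        using disjoint_set_mult_powers_of_root[OF P less.prems w p] by (simp add: C'_def)
      have "C \<subseteq> C'" and "range (\<lambda>j::int. w [^] j) \<subseteq> C'"
        using subgroups_subset_set_mult[OF less.prems(1) W] by (simp_all add: C'_def)
      moreover have "w \<in> range (\<lambda>j::int. w [^] j)" using w(1) by (metis int_pow_1 rangeI)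
      moreover have "w \<notin> C" using w(2) subgroups_subset_set_mult(2)[OF P less.prems(1)] by blast
      ultimately have "C \<subset> C'" by blast
      then have "card C < card C'"
        using psubset_card_mono finite_subset[OF subgroup.subset[OF C'] fin] by blast
      moreover have "card C' \<le> card (carrier G)" using card_mono[OF fin subgroup.subset[OF C']] .
      ultimately have "card (carrier G) - card C' < card (carrier G) - card C" by linarith
      then show ?thesis using less.hyps[OF _ C' disj] by blast
    qed
  qed
  from this[OF triv_subgroup] show thesis using that by auto
qed

lemma (in group) card_powers:
  assumes "a \<in> carrier G"
  shows "card (range (\<lambda>i::int. a [^] i)) = ord a"
  using cyclic_order_is_ord[OF assms] carrier_subgroup_generated_by_singleton[OF assms]
  by (simp add: order_def)

lemma (in comm_group) cyclic_direct_factor: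
  assumes fin: "finite (carrier G)" and a: "a \<in> carrier G"
    and max: "\<And>x. x \<in> carrier G \<Longrightarrow> ord x \<le> ord a"
  obtains C where "subgroup C G"
    "G \<cong> subgroup_generated G (range (\<lambda>i::int. a [^] i)) \<times>\<times> subgroup_generated G C"
    "card (carrier G) = ord a * card C"
proof -
  obtain C where C: "subgroup C G" and disj: "range (\<lambda>i::int. a [^] i) \<inter> C \<subseteq> {\<one>}"
    and span: "range (\<lambda>i::int. a [^] i) <#> C = carrier G"
    using exists_complement_powers[OF fin a pow_ord_max_eq_one[OF fin a max]] .
  interpret group_disjoint_sum G "range (\<lambda>i::int. a [^] i)" C
    using subgroup_of_powers[OF a] C by (simp add: group_disjoint_sum_def is_group)
  have iso: "subgroup_generated G (range (\<lambda>i::int. a [^] i)) \<times>\<times> subgroup_generated G C \<cong> G"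
    using iso_group_mul[OF comm_group_axioms] disj span by (auto simp: is_iso_def)
  have "card (carrier G) = ord a * card C"
    using iso_same_card[OF iso] subgroup.carrier_subgroup_generated_subgroup[OF C]
      subgroup.carrier_subgroup_generated_subgroup[OF subgroup_of_powers[OF a]]
    by (simp add: card_cartesian_product card_powers[OF a])
  then show thesis
    using that C iso by (simp add: group.iso_sym DirProd_group)
qed

lemma iso_subgroup_generated_powers:
  assumes A: "group A" and B: "group B" and a: "a \<in> carrier A" and b: "b \<in> carrier B"
    and ord: "group.ord A a = group.ord B b"
  shows "subgroup_generated A (range (\<lambda>i::int. a [^]\<^bsub>A\<^esub> i))
    \<cong> subgroup_generated B (range (\<lambda>i::int. b [^]\<^bsub>B\<^esub> i))"
proof -
  interpret A: group A by (rule A)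
  interpret B: group B by (rule B)
  have eq: "a [^]\<^bsub>A\<^esub> i = a [^]\<^bsub>A\<^esub> j \<longleftrightarrow> b [^]\<^bsub>B\<^esub> i = b [^]\<^bsub>B\<^esub> j" for i j :: int
    using A.int_pow_eq[OF a] B.int_pow_eq[OF b] ord by simp
  define h where "h x = b [^]\<^bsub>B\<^esub> (SOME i::int. x = a [^]\<^bsub>A\<^esub> i)" for x
  have h: "h (a [^]\<^bsub>A\<^esub> i) = b [^]\<^bsub>B\<^esub> i" for i :: int
    unfolding h_def using someI[of "\<lambda>j. a [^]\<^bsub>A\<^esub> i = a [^]\<^bsub>A\<^esub> j" i] eq by simp
  have "h \<in> iso (subgroup_generated A (range (\<lambda>i::int. a [^]\<^bsub>A\<^esub> i)))
      (subgroup_generated B (range (\<lambda>i::int. b [^]\<^bsub>B\<^esub> i)))"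
    using a b by (auto simp: iso_def hom_def bij_betw_def inj_on_def h eq image_iff
        subgroup.carrier_subgroup_generated_subgroup[OF A.subgroup_of_powers[OF a]]
        subgroup.carrier_subgroup_generated_subgroup[OF B.subgroup_of_powers[OF b]]
        simp flip: A.int_pow_mult B.int_pow_mult)
  then show ?thesis by (auto simp: is_iso_def)
qed

lemma iso_trivial_groups:
  assumes "monoid A" and "monoid B" and "carrier A = {\<one>\<^bsub>A\<^esub>}" and "carrier B = {\<one>\<^bsub>B\<^esub>}"
  shows "A \<cong> B"
proof -
  have "(\<lambda>_. \<one>\<^bsub>B\<^esub>) \<in> iso A B"
    using assms by (auto simp: iso_def hom_def bij_betw_def inj_on_def monoid.r_one)
  then show ?thesis by (auto simp: is_iso_def)
qed

section \<open>Torsion counts determine finite abelian groups\<close>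

definition torsion :: "('a, 'c) monoid_scheme \<Rightarrow> nat \<Rightarrow> 'a set" where
  "torsion A k = {x \<in> carrier A. x [^]\<^bsub>A\<^esub> k = \<one>\<^bsub>A\<^esub>}"

lemma torsion_0 [simp]: "torsion A 0 = carrier A"
  by (auto simp: torsion_def)

lemma bij_betw_torsion:
  assumes A: "monoid A" and f: "bij_betw f (carrier A) (carrier B)"
    and pow: "\<And>x. x \<in> carrier A \<Longrightarrow> f (x [^]\<^bsub>A\<^esub> k) = f x [^]\<^bsub>B\<^esub> k"
    and one: "f \<one>\<^bsub>A\<^esub> = \<one>\<^bsub>B\<^esub>"
  shows "bij_betw f (torsion A k) (torsion B k)"
proof (rule bij_betw_subset[OF f])
  show "torsion A k \<subseteq> carrier A" by (auto simp: torsion_def)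
  have "f x \<in> torsion B k \<longleftrightarrow> x \<in> torsion A k" if x: "x \<in> carrier A" for x
  proof -
    have "x [^]\<^bsub>A\<^esub> k = \<one>\<^bsub>A\<^esub> \<longleftrightarrow> f (x [^]\<^bsub>A\<^esub> k) = f \<one>\<^bsub>A\<^esub>"
      using x A inj_on_eq_iff[OF bij_betw_imp_inj_on[OF f]] by (simp add: monoid.nat_pow_closed)
    then show ?thesis using x pow one bij_betw_apply[OF f x] by (simp add: torsion_def)
  qed
  then show "f ` torsion A k = torsion B k"
    using f unfolding bij_betw_def by (force simp: torsion_def)
qed

lemma card_torsion_iso:
  assumes "group A" and "group B" and "A \<cong> B"
  shows "card (torsion A k) = card (torsion B k)"
proof -
  obtain h where h: "h \<in> iso A B" using assms(3) by (auto simp: is_iso_def)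
  then have "bij_betw h (torsion A k) (torsion B k)"
    using assms(1,2) by (intro bij_betw_torsion)
      (auto simp: iso_def hom_nat_pow hom_one group.is_monoid)
  then show ?thesis by (rule bij_betw_same_card)
qed

lemma (in monoid) card_torsion_gt_0:
  assumes "finite (carrier G)"
  shows "0 < card (torsion G k)"
proof -
  have "\<one> \<in> torsion G k" by (simp add: torsion_def)
  moreover have "torsion G k \<subseteq> carrier G" by (auto simp: torsion_def)
  ultimately show ?thesis using assms card_gt_0_iff finite_subset by blast
qed

lemma torsion_eq_carrier_iff_card:
  assumes "finite (carrier A)"
  shows "torsion A k = carrier A \<longleftrightarrow> card (torsion A k) = card (carrier A)"
  using assms card_subset_eq[of "carrier A" "torsion A k"] by (auto simp: torsion_def)

lemma nat_pow_DirProd: "(x, y) [^]\<^bsub>A \<times>\<times> B\<^esub> (k::nat) = (x [^]\<^bsub>A\<^esub> k, y [^]\<^bsub>B\<^esub> k)"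
  by (induction k) simp_all

lemma torsion_DirProd: "torsion (A \<times>\<times> B) k = torsion A k \<times> torsion B k"
  by (auto simp: torsion_def nat_pow_DirProd)

lemma card_torsion_iso_DirProd:
  assumes "group A" and "group P" and "group C" and "A \<cong> P \<times>\<times> C"
  shows "card (torsion A k) = card (torsion P k) * card (torsion C k)"
  using card_torsion_iso[OF assms(1) DirProd_group[OF assms(2,3)] assms(4)]
  by (simp add: torsion_DirProd card_cartesian_product)

lemma card_torsion_DirProd_cancel:
  assumes "group A" and "group B" and "group P" and "group Q" and "group C" and "group D"
    and "finite (carrier P)" and "A \<cong> P \<times>\<times> C" and "B \<cong> Q \<times>\<times> D" and "P \<cong> Q"
    and "card (torsion A k) = card (torsion B k)"
  shows "card (torsion C k) = card (torsion D k)"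
proof -
  have "card (torsion P k) * card (torsion C k) = card (torsion P k) * card (torsion D k)"
    using assms card_torsion_iso_DirProd[of A P C] card_torsion_iso_DirProd[of B Q D]
      card_torsion_iso[of P Q] by simp
  moreover have "0 < card (torsion P k)"
    using monoid.card_torsion_gt_0[OF group.is_monoid] assms(3,7) by blast
  ultimately show ?thesis by simp
qed

lemma (in group) torsion_eq_carrier_iff:
  assumes a: "a \<in> carrier G" and exp: "\<And>x. x \<in> carrier G \<Longrightarrow> x [^] ord a = \<one>"
  shows "torsion G k = carrier G \<longleftrightarrow> ord a dvd k"
proof
  assume "torsion G k = carrier G"
  then show "ord a dvd k" using a pow_eq_id by (auto simp: torsion_def)
next
  assume "ord a dvd k"
  then have "x [^] k = \<one>" if "x \<in> carrier G" for x
    using exp[OF that] that by (auto simp flip: nat_pow_pow elim!: dvdE)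
  then show "torsion G k = carrier G" by (auto simp: torsion_def)
qed

lemma max_ord_eq_if_card_torsion_eq:
  assumes A: "comm_group A" and B: "comm_group B"
    and fin: "finite (carrier A)" "finite (carrier B)"
    and tors: "\<And>k. card (torsion A k) = card (torsion B k)"
    and a: "a \<in> carrier A" "\<And>x. x \<in> carrier A \<Longrightarrow> group.ord A x \<le> group.ord A a"
    and b: "b \<in> carrier B" "\<And>y. y \<in> carrier B \<Longrightarrow> group.ord B y \<le> group.ord B b"
  shows "group.ord A a = group.ord B b"
proof -
  interpret A: comm_group A by (rule A)
  interpret B: comm_group B by (rule B)
  have "card (carrier A) = card (carrier B)" using tors[of 0] by simp
  then have "torsion A k = carrier A \<longleftrightarrow> torsion B k = carrier B" for k
    by (simp only: torsion_eq_carrier_iff_card[OF fin(1)] torsion_eq_carrier_iff_card[OF fin(2)] tors)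
  then have "A.ord a dvd k \<longleftrightarrow> B.ord b dvd k" for k
    using A.torsion_eq_carrier_iff[OF a(1) A.pow_ord_max_eq_one[OF fin(1) a]]
      B.torsion_eq_carrier_iff[OF b(1) B.pow_ord_max_eq_one[OF fin(2) b]] by (simp only:)
  then show ?thesis by (meson dvd_antisym dvd_refl)
qed

text \<open>Split off the cyclic factors generated by elements of maximal order; they are
  isomorphic, so their torsion counts cancel and induction on the order applies to the
  complements.\<close>
theorem iso_if_card_torsion_eq:
  fixes A :: "('a, 'c) monoid_scheme" and B :: "('b, 'd) monoid_scheme"
  assumes "comm_group A" and "comm_group B" and "finite (carrier A)" and "finite (carrier B)"
    and "\<And>k. card (torsion A k) = card (torsion B k)"
  shows "A \<cong> B"
  using assms
proof (induction "card (carrier A)" arbitrary: A B rule: less_induct)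
  case less
  interpret A: comm_group A by (rule less.prems(1))
  interpret B: comm_group B by (rule less.prems(2))
  show ?case
  proof (cases "carrier A = {\<one>\<^bsub>A\<^esub>}")
    case True
    then have "card (carrier B) = 1" using less.prems(5)[of 0] by simp
    then obtain x where x: "carrier B = {x}" by (auto simp: card_1_singleton_iff)
    then have "carrier B = {\<one>\<^bsub>B\<^esub>}" using B.one_closed[unfolded x] by simp
    with True show ?thesis by (simp add: iso_trivial_groups)
  next
    case False
    obtain a where a: "a \<in> carrier A" "\<And>x. x \<in> carrier A \<Longrightarrow> A.ord x \<le> A.ord a"
      using A.exists_max_ord[OF less.prems(3)] by blast
    obtain b where b: "b \<in> carrier B" "\<And>y. y \<in> carrier B \<Longrightarrow> B.ord y \<le> B.ord b"
      using B.exists_max_ord[OF less.prems(4)] by blast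
    define PA PB where "PA = subgroup_generated A (range (\<lambda>i::int. a [^]\<^bsub>A\<^esub> i))"
      and "PB = subgroup_generated B (range (\<lambda>i::int. b [^]\<^bsub>B\<^esub> i))"
    have PAB: "PA \<cong> PB"
      unfolding PA_def PB_def
      by (intro iso_subgroup_generated_powers a b A.is_group B.is_group
          max_ord_eq_if_card_torsion_eq[OF less.prems a b])
    obtain C where C: "subgroup C A" and isoA: "A \<cong> PA \<times>\<times> subgroup_generated A C"
      and card_A: "card (carrier A) = A.ord a * card C"
      using A.cyclic_direct_factor[OF less.prems(3) a] unfolding PA_def by blast
    obtain D where D: "subgroup D B" and isoB: "B \<cong> PB \<times>\<times> subgroup_generated B D"
      using B.cyclic_direct_factor[OF less.prems(4) b] unfolding PB_def by metis
    have tors_CD: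
      "card (torsion (subgroup_generated A C) k) = card (torsion (subgroup_generated B D) k)" for k
      using card_torsion_DirProd_cancel[OF _ _ _ _ _ _ _ isoA isoB PAB] less.prems(5)
        finite_subset[OF A.carrier_subgroup_generated_subset less.prems(3)]
      by (simp add: PA_def PB_def)
    have "2 \<le> A.ord a" using A.two_le_ord_max[OF less.prems(3) a False] .
    moreover have "0 < card (carrier A)" using less.prems(3) A.one_closed by (auto simp: card_gt_0_iff)
    ultimately have "card C < card (carrier A)" using card_A by simp
    moreover have "comm_group (subgroup_generated A C)" "comm_group (subgroup_generated B D)"
      using A.abelian_subgroup_generated B.abelian_subgroup_generated less.prems(1,2) by blast+
    ultimately have "subgroup_generated A C \<cong> subgroup_generated B D"
      using less.hyps tors_CD subgroup.carrier_subgroup_generated_subgroup[OF C]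
        subgroup.carrier_subgroup_generated_subgroup[OF D]
        finite_subset[OF subgroup.subset[OF C] less.prems(3)]
        finite_subset[OF subgroup.subset[OF D] less.prems(4)]
      by simp
    then have "PA \<times>\<times> subgroup_generated A C \<cong> PB \<times>\<times> subgroup_generated B D"
      using group.DirProd_iso_trans[OF _ PAB] by (simp add: PA_def)
    then have "A \<cong> PB \<times>\<times> subgroup_generated B D" by (rule iso_trans[OF isoA])
    moreover have "PB \<times>\<times> subgroup_generated B D \<cong> B"
      using group.iso_sym[OF _ isoB] by (simp add: PB_def DirProd_group)
    ultimately show ?thesis by (rule iso_trans)
  qed
qed

section \<open>The center\<close>

lemma (in group) subgroup_center: "subgroup (grp_center G) G"
proof (rule subgroupI)
  show "grp_center G \<subseteq> carrier G" and "grp_center G \<noteq> {}"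
    by (auto simp: grp_center_def)
next
  fix x y assume x: "x \<in> grp_center G" and y: "y \<in> grp_center G"
  then have xG: "x \<in> carrier G" and yG: "y \<in> carrier G"
    and "\<And>z. z \<in> carrier G \<Longrightarrow> x \<otimes> z = z \<otimes> x" and "\<And>z. z \<in> carrier G \<Longrightarrow> y \<otimes> z = z \<otimes> y"
    unfolding grp_center_def by blast+
  then have "x \<otimes> y \<otimes> z = z \<otimes> (x \<otimes> y)" if "z \<in> carrier G" for z
    using that by (metis m_assoc)
  then show "x \<otimes> y \<in> grp_center G" unfolding grp_center_def using m_closed[OF xG yG] by blast
next
  fix x assume x: "x \<in> grp_center G"
  then have xG: "x \<in> carrier G" and xc: "\<And>z. z \<in> carrier G \<Longrightarrow> x \<otimes> z = z \<otimes> x"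
    unfolding grp_center_def by blast+
  have "inv x \<otimes> z = z \<otimes> inv x" if "z \<in> carrier G" for z
    using xc[of "inv z"] xG that by (metis inv_closed inv_inv inv_mult_group)
  then show "inv x \<in> grp_center G" unfolding grp_center_def using inv_closed[OF xG] by blast
qed

lemma (in group) comm_group_center: "comm_group (G\<lparr>carrier := grp_center G\<rparr>)"
proof (rule group.group_comm_groupI[OF subgroup_imp_group[OF subgroup_center]])
  fix x y
  assume "x \<in> carrier (G\<lparr>carrier := grp_center G\<rparr>)" and "y \<in> carrier (G\<lparr>carrier := grp_center G\<rparr>)"
  then have "x \<in> grp_center G" and "y \<in> grp_center G" by simp_all
  then have "x \<otimes> y = y \<otimes> x" unfolding grp_center_def by blast
  then show "x \<otimes>\<^bsub>G\<lparr>carrier := grp_center G\<rparr>\<^esub> y = y \<otimes>\<^bsub>G\<lparr>carrier := grp_center G\<rparr>\<^esub> x"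
    by simp
qed

lemma (in group) mem_center_iff_conj:
  "z \<in> grp_center G \<longleftrightarrow> z \<in> carrier G \<and> (\<forall>x\<in>carrier G. z \<otimes> x \<otimes> inv z = x)"
proof -
  have "z \<otimes> x = x \<otimes> z \<longleftrightarrow> z \<otimes> x \<otimes> inv z = x" if "z \<in> carrier G" "x \<in> carrier G" for x
    using that inv_solve_right[of x "z \<otimes> x" z] by auto
  then show ?thesis unfolding grp_center_def by auto
qed

lemma nat_pow_carrier_update [simp]: "x [^]\<^bsub>G\<lparr>carrier := S\<rparr>\<^esub> (n::nat) = x [^]\<^bsub>G\<^esub> n"
  by (simp add: nat_pow_def)

lemma pq_iso_bij_betw_center:
  assumes G: "group G" and H: "group H" and f: "pq_iso G H f"
  shows "bij_betw f (grp_center G) (grp_center H)"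
proof -
  interpret G: group G by (rule G)
  interpret H: group H by (rule H)
  have bij: "bij_betw f (carrier G) (carrier H)"
    and conj: "\<And>a b. a \<in> carrier G \<Longrightarrow> b \<in> carrier G \<Longrightarrow>
      f (a \<otimes>\<^bsub>G\<^esub> b \<otimes>\<^bsub>G\<^esub> inv\<^bsub>G\<^esub> a) = f a \<otimes>\<^bsub>H\<^esub> f b \<otimes>\<^bsub>H\<^esub> inv\<^bsub>H\<^esub> (f a)"
    using f by (auto simp: pq_iso_def)
  have center: "f z \<in> grp_center H \<longleftrightarrow> z \<in> grp_center G" if z: "z \<in> carrier G" for z
  proof -
    have "(\<forall>y\<in>carrier H. f z \<otimes>\<^bsub>H\<^esub> y \<otimes>\<^bsub>H\<^esub> inv\<^bsub>H\<^esub> (f z) = y)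
        \<longleftrightarrow> (\<forall>x\<in>carrier G. f (z \<otimes>\<^bsub>G\<^esub> x \<otimes>\<^bsub>G\<^esub> inv\<^bsub>G\<^esub> z) = f x)"
      using bij_betw_ball[OF bij] conj z by simp
    also have "\<dots> \<longleftrightarrow> (\<forall>x\<in>carrier G. z \<otimes>\<^bsub>G\<^esub> x \<otimes>\<^bsub>G\<^esub> inv\<^bsub>G\<^esub> z = x)"
      using inj_on_eq_iff[OF bij_betw_imp_inj_on[OF bij]] z by simp
    finally show ?thesis
      using z bij_betw_apply[OF bij z] G.mem_center_iff_conj H.mem_center_iff_conj by simp
  qed
  have "f ` grp_center G = grp_center H"
  proof
    show "f ` grp_center G \<subseteq> grp_center H"
      using center subgroup.subset[OF G.subgroup_center] by blast
    show "grp_center H \<subseteq> f ` grp_center G"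
    proof
      fix y assume y: "y \<in> grp_center H"
      then obtain z where "z \<in> carrier G" "y = f z"
        using subgroup.subset[OF H.subgroup_center] bij unfolding bij_betw_def by blast
      then show "y \<in> f ` grp_center G" using center y by blast
    qed
  qed
  then show ?thesis
    using bij_betw_subset[OF bij subgroup.subset[OF G.subgroup_center]] by blast
qed

lemma pq_iso_card_torsion_center:
  assumes G: "group G" and H: "group H" and f: "pq_iso G H f"
  shows "card (torsion (G\<lparr>carrier := grp_center G\<rparr>) k) = card (torsion (H\<lparr>carrier := grp_center H\<rparr>) k)"
proof -
  have pow: "f (x [^]\<^bsub>G\<^esub> k) = f x [^]\<^bsub>H\<^esub> k" if "x \<in> carrier G" for x
    using f that unfolding pq_iso_def by (metis int_pow_int)
  have "bij_betw f (torsion (G\<lparr>carrier := grp_center G\<rparr>) k) (torsion (H\<lparr>carrier := grp_center H\<rparr>) k)"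
    using pq_iso_bij_betw_center[OF G H f] f pow subgroup.subset[OF group.subgroup_center[OF G]]
      group.is_monoid[OF group.subgroup_imp_group[OF G group.subgroup_center[OF G]]]
    by (intro bij_betw_torsion) (auto simp: pq_iso_def)
  then show ?thesis by (rule bij_betw_same_card)
qed

theorem mainTheorem5:
  fixes G :: "('a, 'c) monoid_scheme" and H :: "('b, 'd) monoid_scheme"
  assumes "group G" and "group H" and "pq_isomorphic G H"
  shows "grp_center G \<approx> grp_center H \<and>
         (finite (grp_center G) \<longrightarrow>
           G\<lparr>carrier := grp_center G\<rparr> \<cong> H\<lparr>carrier := grp_center H\<rparr>)"
proof -
  obtain f where f: "pq_iso G H f" using assms(3) unfolding pq_isomorphic_def by blast
  have Z: "bij_betw f (grp_center G) (grp_center H)"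
    by (rule pq_iso_bij_betw_center[OF assms(1,2) f])
  have "G\<lparr>carrier := grp_center G\<rparr> \<cong> H\<lparr>carrier := grp_center H\<rparr>" if "finite (grp_center G)"
    using iso_if_card_torsion_eq[OF group.comm_group_center[OF assms(1)] group.comm_group_center[OF assms(2)]]
      that bij_betw_finite[OF Z] pq_iso_card_torsion_center[OF assms(1,2) f] by simp
  then show ?thesis using Z by (auto simp: eqpoll_def)
qed

end
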